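(* Let $\alpha,\beta,\gamma\in\mathbb{R}$, and let $G_3$ be the connected, simply connected Lie group whose Lie algebra $\mathfrak{g}_3$ has a basis $\{e_1,e_2,e_3\}$ with $[e_1,e_2]=-\gamma e_3$, $[e_1,e_3]=-\beta e_2$, $[e_2,e_3]=\alpha e_1$, equipped with the left-invariant Lorentzian metric $g$ for which $\{e_1,e_2,e_3\}$ is pseudo-orthonormal with $e_3$ timelike, and with the product structure $J$. Let $\lambda_0,c\in\mathbb{R}$. Then there exists a derivation $D$ of $\mathfrak{g}_3$ with $\widetilde{\mathrm{Ric}}^0=(s^0\lambda_0+c)\mathrm{Id}+D$ (i.e. $(G_3,g,J)$ is an algebraic Schouten soliton associated to the canonical connection $\nabla^0$) if and only if one of the following holds: (i) $\alpha=\beta=\gamma=0$ (for all $c$); (ii) $\alpha=\beta=0$, $\gamma\neq0$ and $c=\gamma^2-\gamma^2\lambda_0$; (iii) ($\alpha\neq0$ or $\beta\neq0$), $\gamma=0$ and $c=0$; (iv) ($\alpha\neq0$ or $\beta\neq0$), $\gamma=\alpha+\beta$ and $c=0$.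
   Context: Pseudo-orthonormal means $g(e_1,e_1)=g(e_2,e_2)=1$, $g(e_3,e_3)=-1$, $g(e_i,e_j)=0$ for $i\neq j$; left-invariant tensors are identified with their values on $\mathfrak{g}$. $\nabla$ is the Levi-Civita connection of $g$. The product structure $J$ is the left-invariant endomorphism with $Je_1=e_1$, $Je_2=e_2$, $Je_3=-e_3$. The canonical connection is $\nabla^0_XY=\nabla_XY-\frac12(\nabla_XJ)JY$, and the Kobayashi–Nomizu connection is $\nabla^1_XY=\nabla^0_XY-\frac14[(\nabla_YJ)JX-(\nabla_{JY}J)X]$. For $k=0,1$: $R^k(X,Y)Z=\nabla^k_X\nabla^k_YZ-\nabla^k_Y\nabla^k_XZ-\nabla^k_{[X,Y]}Z$; $\rho^k(X,Y)=-g(R^k(X,e_1)Y,e_1)-g(R^k(X,e_2)Y,e_2)+g(R^k(X,e_3)Y,e_3)$; $\widetilde\rho^k(X,Y)=\frac12(\rho^k(X,Y)+\rho^k(Y,X))$; $\widetilde{\mathrm{Ric}}^k$ is defined by $\widetilde\rho^k(X,Y)=g(\widetilde{\mathrm{Ric}}^k(X),Y)$; and $s^k=\widetilde\rho^k(e_1,e_1)+\widetilde\rho^k(e_2,e_2)-\widetilde\rho^k(e_3,e_3)$. A derivation of $\mathfrak{g}$ is a linear map $D$ with $D[X,Y]=[DX,Y]+[X,DY]$. $(G,g,J)$ is an algebraic Schouten soliton associated to $\nabla^k$ (with real constants $\lambda_0,c$) if $\widetilde{\mathrm{Ric}}^k=(s^k\lambda_0+c)\mathrm{Id}+D$ for some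 derivation $D$. *)

theory Defs
  imports "HOL-Analysis.Analysis"
begin

text \<open>The Lie algebra g_3 is modelled as real^3 with standard basis e1, e2, e3
  (indices 1, 2, 3 of the type 3).  Parameters al, be, ga stand for alpha, beta, gamma.\<close>

definition E :: "3 \<Rightarrow> real^3" where "E i = axis i 1"

definition br :: "real \<Rightarrow> real \<Rightarrow> real \<Rightarrow> real^3 \<Rightarrow> real^3 \<Rightarrow> real^3" where
  "br al be ga X Y = vector
     [ al * (X$2 * Y$3 - X$3 * Y$2),
       - be * (X$1 * Y$3 - X$3 * Y$1),
       - ga * (X$1 * Y$2 - X$2 * Y$1) ]"

definition gm :: "real^3 \<Rightarrow> real^3 \<Rightarrow> real" where
  "gm X Y = X$1 * Y$1 + X$2 * Y$2 - X$3 * Y$3"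

text \<open>Raising an index: the unique vector V with gm V (E i) = f (E i) for all i.\<close>
definition sharp :: "(real^3 \<Rightarrow> real) \<Rightarrow> real^3" where
  "sharp f = (\<Sum>i\<in>UNIV. (gm (E i) (E i) * f (E i)) *\<^sub>R E i)"

text \<open>Levi-Civita connection on left-invariant fields (Koszul formula).\<close>
definition LC :: "real \<Rightarrow> real \<Rightarrow> real \<Rightarrow> real^3 \<Rightarrow> real^3 \<Rightarrow> real^3" where
  "LC al be ga X Y = sharp (\<lambda>Z. (1/2) * (gm (br al be ga X Y) Z - gm (br al be ga Y Z) X
                                     + gm (br al be ga Z X) Y))"

definition Jp :: "real^3 \<Rightarrow> real^3" where
  "Jp X = vector [X$1, X$2, - X$3]"

definition nablaJ :: "real \<Rightarrow> real \<Rightarrow> real \<Rightarrow> real^3 \<Rightarrow> real^3 \<Rightarrow> real^3" where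
  "nablaJ al be ga X Y = LC al be ga X (Jp Y) - Jp (LC al be ga X Y)"

definition can0 :: "real \<Rightarrow> real \<Rightarrow> real \<Rightarrow> real^3 \<Rightarrow> real^3 \<Rightarrow> real^3" where
  "can0 al be ga X Y = LC al be ga X Y - (1/2) *\<^sub>R nablaJ al be ga X (Jp Y)"

definition R0 :: "real \<Rightarrow> real \<Rightarrow> real \<Rightarrow> real^3 \<Rightarrow> real^3 \<Rightarrow> real^3 \<Rightarrow> real^3" where
  "R0 al be ga X Y Z = can0 al be ga X (can0 al be ga Y Z) - can0 al be ga Y (can0 al be ga X Z)
                       - can0 al be ga (br al be ga X Y) Z"

definition rho0 :: "real \<Rightarrow> real \<Rightarrow> real \<Rightarrow> real^3 \<Rightarrow> real^3 \<Rightarrow> real" where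
  "rho0 al be ga X Y = - gm (R0 al be ga X (E 1) Y) (E 1) - gm (R0 al be ga X (E 2) Y) (E 2)
                       + gm (R0 al be ga X (E 3) Y) (E 3)"

definition rhot0 :: "real \<Rightarrow> real \<Rightarrow> real \<Rightarrow> real^3 \<Rightarrow> real^3 \<Rightarrow> real" where
  "rhot0 al be ga X Y = (1/2) * (rho0 al be ga X Y + rho0 al be ga Y X)"

text \<open>Ric~^0, defined by rhot0 X Y = gm (Ric0 X) Y.\<close>
definition Ric0 :: "real \<Rightarrow> real \<Rightarrow> real \<Rightarrow> real^3 \<Rightarrow> real^3" where
  "Ric0 al be ga X = sharp (\<lambda>Y. rhot0 al be ga X Y)"

definition s0 :: "real \<Rightarrow> real \<Rightarrow> real \<Rightarrow> real" where
  "s0 al be ga = rhot0 al be ga (E 1) (E 1) + rhot0 al be ga (E 2) (E 2) - rhot0 al be ga (E 3) (E 3)"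

definition is_derivation :: "real \<Rightarrow> real \<Rightarrow> real \<Rightarrow> (real^3 \<Rightarrow> real^3) \<Rightarrow> bool" where
  "is_derivation al be ga D \<longleftrightarrow> linear D \<and>
     (\<forall>X Y. D (br al be ga X Y) = br al be ga (D X) Y + br al be ga X (D Y))"

end

theory Submission
  imports Defs
begin

text \<open>In the basis e1, e2, e3 the canonical connection only sees the coefficient
  (gamma - alpha - beta)/2, and the symmetrised Ricci operator of nabla^0 is diagonal,
  diag(k, k, 0) with k = gamma (gamma - alpha - beta)/2 and s^0 = 2k.  The Schouten soliton
  equation therefore forces D = diag(k - m, k - m, -m) with m = s^0 lam0 + c, and a
  diagonal map diag(p, p, q) is a derivation exactly when gamma (q - 2p) = alpha q = beta q = 0.
  The four cases are the solutions of these three scalar equations.\<close>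

lemma E_nth: "E i $ j = (if j = i then 1 else 0)"
  by (simp add: E_def axis_def)

lemma vec3_eq_iff: "(x::real^3) = y \<longleftrightarrow> x$1 = y$1 \<and> x$2 = y$2 \<and> x$3 = y$3"
  by (simp add: vec_eq_iff forall_3)

lemma sharp_nth:
  "sharp f $ 1 = f (E 1)" "sharp f $ 2 = f (E 2)" "sharp f $ 3 = - f (E 3)"
  by (simp_all add: sharp_def sum_3 E_nth gm_def)

lemma br_nth:
  "br al be ga X Y $ 1 = al * (X$2 * Y$3 - X$3 * Y$2)"
  "br al be ga X Y $ 2 = - be * (X$1 * Y$3 - X$3 * Y$1)"
  "br al be ga X Y $ 3 = - ga * (X$1 * Y$2 - X$2 * Y$1)"
  by (simp_all add: br_def)

lemma Jp_nth: "Jp X $ 1 = X$1" "Jp X $ 2 = X$2" "Jp X $ 3 = - X$3"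
  by (simp_all add: Jp_def)

lemma LC_nth:
  "LC al be ga X Y $ 1 = (1/2)*(ga*X$3*Y$2 + ga*X$2*Y$3 - be*X$3*Y$2 - be*X$2*Y$3 - al*X$3*Y$2 + al*X$2*Y$3)"
  "LC al be ga X Y $ 2 = (1/2)*(- ga*X$3*Y$1 - ga*X$1*Y$3 + be*X$3*Y$1 - be*X$1*Y$3 + al*X$3*Y$1 + al*X$1*Y$3)"
  "LC al be ga X Y $ 3 = (1/2)*(ga*X$2*Y$1 - ga*X$1*Y$2 - be*X$2*Y$1 - be*X$1*Y$2 + al*X$2*Y$1 + al*X$1*Y$2)"
  by (simp_all add: LC_def sharp_nth gm_def br_nth E_nth field_simps)

lemma can0_eq:
  "can0 al be ga X Y = vector [((ga-al-be)/2)*X$3*Y$2, -((ga-al-be)/2)*X$3*Y$1, 0]"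
  unfolding vec3_eq_iff by (simp add: can0_def nablaJ_def LC_nth Jp_nth field_simps)

lemma R0_eq:
  "R0 al be ga X Y Z =
     vector [((ga-al-be)/2)*(ga*(X$1*Y$2 - X$2*Y$1))*Z$2, -((ga-al-be)/2)*(ga*(X$1*Y$2 - X$2*Y$1))*Z$1, 0]"
  unfolding vec3_eq_iff R0_def by (simp add: can0_eq br_nth field_simps)

definition diag3 :: "real \<Rightarrow> real \<Rightarrow> real^3 \<Rightarrow> real^3" where
  "diag3 p q X = vector [p * X$1, p * X$2, q * X$3]"

lemma Ric0_eq_diag3: "Ric0 al be ga = diag3 (ga*(ga-al-be)/2) 0"
  unfolding vec3_eq_iff Ric0_def diag3_def fun_eq_iff
  by (simp add: sharp_nth rhot0_def rho0_def R0_eq gm_def E_nth field_simps)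

lemma s0_eq: "s0 al be ga = ga*(ga-al-be)"
  by (simp add: s0_def rhot0_def rho0_def R0_eq gm_def E_nth field_simps)

lemma linear_diag3: "linear (diag3 p q)"
  by (rule linearI) (simp_all add: diag3_def vec3_eq_iff algebra_simps)

lemma is_derivation_diag3_iff:
  "is_derivation al be ga (diag3 p q) \<longleftrightarrow> ga*(q - 2*p) = 0 \<and> be*q = 0 \<and> al*q = 0"
proof
  assume "is_derivation al be ga (diag3 p q)"
  then have Leibniz: "\<And>X Y. diag3 p q (br al be ga X Y) = br al be ga (diag3 p q X) Y + br al be ga X (diag3 p q Y)"
    unfolding is_derivation_def by blast
  have "ga*(q - 2*p) = 0"
    using arg_cong[OF Leibniz[of "E 1" "E 2"], of "\<lambda>v. v$3"]
    by (simp add: diag3_def br_nth E_nth algebra_simps)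
  moreover have "be*q = 0"
    using arg_cong[OF Leibniz[of "E 1" "E 3"], of "\<lambda>v. v$2"]
    by (simp add: diag3_def br_nth E_nth algebra_simps)
  moreover have "al*q = 0"
    using arg_cong[OF Leibniz[of "E 2" "E 3"], of "\<lambda>v. v$1"]
    by (simp add: diag3_def br_nth E_nth algebra_simps)
  ultimately show "ga*(q - 2*p) = 0 \<and> be*q = 0 \<and> al*q = 0" by blast
next
  assume "ga*(q - 2*p) = 0 \<and> be*q = 0 \<and> al*q = 0"
  then have "al = 0 \<or> q = 0" "be = 0 \<or> q = 0" "ga = 0 \<or> q = 2*p" by auto
  then show "is_derivation al be ga (diag3 p q)"
    unfolding is_derivation_def using linear_diag3
    by (auto simp: diag3_def vec3_eq_iff br_nth algebra_simps)
qed

lemma soliton_iff_derivation: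
  fixes F :: "'a::real_vector \<Rightarrow> 'a"
  shows "(\<exists>D. P D \<and> (\<forall>X. F X = m *\<^sub>R X + D X)) \<longleftrightarrow> P (\<lambda>X. F X - m *\<^sub>R X)"
proof -
  have "(\<forall>X. F X = m *\<^sub>R X + D X) \<longleftrightarrow> D = (\<lambda>X. F X - m *\<^sub>R X)" for D
    by (auto simp: fun_eq_iff algebra_simps)
  then show ?thesis by auto
qed

lemma Ric0_minus_scaleR: "(\<lambda>X. Ric0 al be ga X - m *\<^sub>R X) = diag3 (ga*(ga-al-be)/2 - m) (- m)"
  by (simp add: Ric0_eq_diag3 diag3_def fun_eq_iff vec3_eq_iff algebra_simps)

lemma schouten_parameter_equations_iff:
  fixes al be ga lam0 c :: real
  defines "k \<equiv> ga*(ga-al-be)/2"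
  defines "m \<equiv> 2*k*lam0 + c"
  shows "ga*(m - 2*k) = 0 \<and> be*m = 0 \<and> al*m = 0 \<longleftrightarrow>
         (al = 0 \<and> be = 0 \<and> ga = 0)
         \<or> (al = 0 \<and> be = 0 \<and> ga \<noteq> 0 \<and> c = ga^2 - ga^2 * lam0)
         \<or> ((al \<noteq> 0 \<or> be \<noteq> 0) \<and> ga = 0 \<and> c = 0)
         \<or> ((al \<noteq> 0 \<or> be \<noteq> 0) \<and> ga = al + be \<and> c = 0)"
proof (cases "al = 0 \<and> be = 0")
  case True
  then have "k = ga^2/2" by (simp add: k_def power2_eq_square)
  then have "ga*(m - 2*k) = ga*(c - (ga^2 - ga^2 * lam0))"
    by (simp add: m_def algebra_simps)
  then show ?thesis using True by auto
next
  case False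
  have "ga*(m - 2*k) = 0 \<and> be*m = 0 \<and> al*m = 0 \<longleftrightarrow> ga*k = 0 \<and> m = 0"
    using False by auto
  also have "\<dots> \<longleftrightarrow> (ga = 0 \<or> ga = al + be) \<and> c = 0"
    by (auto simp: m_def k_def)
  finally show ?thesis using False by auto
qed

theorem theorem4p6:
  fixes \<alpha> \<beta> \<gamma> lam0 c :: real
  shows "(\<exists>D. is_derivation \<alpha> \<beta> \<gamma> D \<and>
            (\<forall>X. Ric0 \<alpha> \<beta> \<gamma> X = (s0 \<alpha> \<beta> \<gamma> * lam0 + c) *\<^sub>R X + D X))
         \<longleftrightarrow>
         ((\<alpha> = 0 \<and> \<beta> = 0 \<and> \<gamma> = 0)
          \<or> (\<alpha> = 0 \<and> \<beta> = 0 \<and> \<gamma> \<noteq> 0 \<and> c = \<gamma>^2 - \<gamma>^2 * lam0)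
          \<or> ((\<alpha> \<noteq> 0 \<or> \<beta> \<noteq> 0) \<and> \<gamma> = 0 \<and> c = 0)
          \<or> ((\<alpha> \<noteq> 0 \<or> \<beta> \<noteq> 0) \<and> \<gamma> = \<alpha> + \<beta> \<and> c = 0))"
proof -
  define k where "k = \<gamma>*(\<gamma>-\<alpha>-\<beta>)/2"
  define m where "m = 2*k*lam0 + c"
  have "s0 \<alpha> \<beta> \<gamma> * lam0 + c = m"
    by (simp add: s0_eq m_def k_def)
  then have "(\<exists>D. is_derivation \<alpha> \<beta> \<gamma> D \<and>
            (\<forall>X. Ric0 \<alpha> \<beta> \<gamma> X = (s0 \<alpha> \<beta> \<gamma> * lam0 + c) *\<^sub>R X + D X))
        \<longleftrightarrow> is_derivation \<alpha> \<beta> \<gamma> (diag3 (k - m) (- m))"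
    by (simp add: soliton_iff_derivation Ric0_minus_scaleR k_def)
  also have "\<dots> \<longleftrightarrow> \<gamma>*(m - 2*k) = 0 \<and> \<beta>*m = 0 \<and> \<alpha>*m = 0"
    by (simp add: is_derivation_diag3_iff algebra_simps)
  finally show ?thesis
    unfolding m_def k_def by (simp only: schouten_parameter_equations_iff)
qed

end
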